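(* Let $X,Y$ be separable metrizable spaces and let $f_n, f\colon X\to Y$ be continuous maps such that $f_n\to f$ uniformly on compact subsets of $X$. If $u_n\to u$ in $\mathcal{M}(X)$, then $\mathcal{M}(f_n)(u_n)\to\mathcal{M}(f)(u)$ in $\mathcal{M}(Y)$. In particular $\mathcal{M}(f_n)\to\mathcal{M}(f)$ uniformly on compact subsets of $\mathcal{M}(X)$.
   Context: For a separable metrizable space $X$, $\mathcal{M}(X)$ is the space of equivalence classes (modulo equality Lebesgue-a.e. on $[0,1]$) of Lebesgue measurable functions $[0,1]\to X$, topologized by convergence in measure, i.e. by the metric $(u,w)\mapsto\int_0^1 d(u(t),w(t))\,dt$ for any compatible bounded metric $d$ on $X$. For continuous $f\colon X\to Y$, $\mathcal{M}(f)(u)=f\circ u$. *)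

theory Defs
  imports "HOL-Analysis.Analysis"
begin

text \<open>Representatives of elements of M(X): Lebesgue measurable maps [0,1] -> X
  (values outside [0,1] are irrelevant).  X is a separable metrizable space,
  modelled as a type of class metric_space + second_countable_topology.\<close>

definition Mset :: "(real \<Rightarrow> 'a::{metric_space,second_countable_topology}) set" where
  "Mset = lebesgue_on {0..1} \<rightarrow>\<^sub>M borel"

text \<open>The metric of convergence in measure, using the bounded compatible metric min d 1.\<close>
definition dM :: "(real \<Rightarrow> 'a::{metric_space,second_countable_topology}) \<Rightarrow> (real \<Rightarrow> 'a) \<Rightarrow> real" where
  "dM u w = integral\<^sup>L (lebesgue_on {0..1}) (\<lambda>t. min (dist (u t) (w t)) 1)"

definition M_topology :: "(real \<Rightarrow> 'a::{metric_space,second_countable_topology}) topology" where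
  "M_topology = topology (\<lambda>S. S \<subseteq> Mset \<and> (\<forall>u\<in>S. \<exists>e>0. \<forall>w\<in>Mset. dM u w < e \<longrightarrow> w \<in> S))"

definition Mmap :: "('a \<Rightarrow> 'b) \<Rightarrow> (real \<Rightarrow> 'a) \<Rightarrow> (real \<Rightarrow> 'b)" where
  "Mmap f u = f \<circ> u"

end

theory Submission
  imports Defs
begin

(* Part 1 (sequential continuity) uses the subsequence criterion for convergence: given
   dM (us n) u \<longrightarrow> 0, every subsequence has a further subsequence along which us n \<longrightarrow> u
   pointwise almost everywhere (an L1-convergent sequence has an a.e.-convergent subsequence).
   At such a point t the values us n t together with u t form a compact set, on which fs n
   converges to f uniformly; with continuity of f this gives fs n (us n t) \<longrightarrow> f (u t).
   Bounded convergence then yields dM (fs n \<circ> us n) (f \<circ> u) \<longrightarrow> 0 along the subsequence.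

   Part 2 (uniform convergence on compact sets) first shows a local version: around every w
   there is a dM-ball on which dM (fs n \<circ> v) (f \<circ> v) < e for all large n.  Otherwise one finds
   v_N \<longrightarrow> w and indices n_N \<ge> N violating this, contradicting Part 1 applied to the sequences
   fs (n_N) and f.  A finite subcover of a compact set by such balls finishes the proof. *)

lemma finite_measure_lebesgue_01: "finite_measure (lebesgue_on {0..1::real})"
  by (rule finite_measure_lebesgue_on) auto

lemma truncated_dist_measurable:
  assumes "u \<in> Mset" "w \<in> Mset"
  shows "(\<lambda>t. min (dist (u t) (w t)) 1) \<in> borel_measurable (lebesgue_on {0..1})"
  using assms unfolding Mset_def by measurable

lemma truncated_dist_integrable:
  assumes "u \<in> Mset" "w \<in> Mset"
  shows "integrable (lebesgue_on {0..1}) (\<lambda>t. min (dist (u t) (w t)) 1)"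
  by (rule finite_measure.integrable_const_bound[OF finite_measure_lebesgue_01, where B=1])
    (auto simp: truncated_dist_measurable assms)

text \<open>dM is a pseudometric on Mset; it is not a metric, since a.e.-equal representatives
  have distance 0.\<close>

lemma dM_nonneg: "dM u w \<ge> 0"
  unfolding dM_def by (rule integral_nonneg_AE) auto

lemma dM_sym: "dM u w = dM w u"
  unfolding dM_def by (simp add: dist_commute)

lemma dM_self: "dM u u = 0"
  unfolding dM_def by simp

lemma dM_triangle:
  assumes "u \<in> Mset" "v \<in> Mset" "w \<in> Mset"
  shows "dM u w \<le> dM u v + dM v w"
proof -
  have pointwise: "min (dist (u t) (w t)) 1 \<le> min (dist (u t) (v t)) 1 + min (dist (v t) (w t)) 1"
    for t
    using dist_triangle[of "u t" "w t" "v t"] zero_le_dist[of "u t" "v t"]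
      zero_le_dist[of "v t" "w t"] unfolding min_def by argo
  have "dM u w \<le> integral\<^sup>L (lebesgue_on {0..1})
                  (\<lambda>t. min (dist (u t) (v t)) 1 + min (dist (v t) (w t)) 1)"
    unfolding dM_def
    by (rule integral_mono) (auto intro!: pointwise truncated_dist_integrable assms)
  also have "\<dots> = dM u v + dM v w"
    unfolding dM_def
    by (rule Bochner_Integration.integral_add) (auto intro!: truncated_dist_integrable assms)
  finally show ?thesis .
qed

lemma Mmap_Mset:
  assumes "continuous_on UNIV g" "u \<in> Mset"
  shows "Mmap g u \<in> Mset"
  using assms unfolding Mset_def Mmap_def
  by (metis borel_measurable_continuous_onI measurable_comp)

lemma openin_M_topology:
  "openin M_topology S \<longleftrightarrow> S \<subseteq> Mset \<and> (\<forall>u\<in>S. \<exists>e>0. \<forall>w\<in>Mset. dM u w < e \<longrightarrow> w \<in> S)"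
proof -
  have "istopology (\<lambda>S::(real \<Rightarrow> 'a) set. S \<subseteq> Mset \<and> (\<forall>u\<in>S. \<exists>e>0. \<forall>w\<in>Mset. dM u w < e \<longrightarrow> w \<in> S))"
    unfolding istopology_def
  proof (rule conjI; intro allI impI)
    fix S T :: "(real \<Rightarrow> 'a) set"
    assume S: "S \<subseteq> Mset \<and> (\<forall>u\<in>S. \<exists>e>0. \<forall>w\<in>Mset. dM u w < e \<longrightarrow> w \<in> S)"
      and T: "T \<subseteq> Mset \<and> (\<forall>u\<in>T. \<exists>e>0. \<forall>w\<in>Mset. dM u w < e \<longrightarrow> w \<in> T)"
    show "S \<inter> T \<subseteq> Mset \<and> (\<forall>u\<in>S \<inter> T. \<exists>e>0. \<forall>w\<in>Mset. dM u w < e \<longrightarrow> w \<in> S \<inter> T)"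
    proof (intro conjI ballI)
      fix u assume "u \<in> S \<inter> T"
      then obtain e1 e2 where "e1 > 0" "\<forall>w\<in>Mset. dM u w < e1 \<longrightarrow> w \<in> S"
        and "e2 > 0" "\<forall>w\<in>Mset. dM u w < e2 \<longrightarrow> w \<in> T"
        using S T by blast
      then show "\<exists>e>0. \<forall>w\<in>Mset. dM u w < e \<longrightarrow> w \<in> S \<inter> T"
        by (intro exI[of _ "min e1 e2"]) auto
    qed (use S in blast)
  next
    fix \<K> :: "(real \<Rightarrow> 'a) set set"
    assume "\<forall>S\<in>\<K>. S \<subseteq> Mset \<and> (\<forall>u\<in>S. \<exists>e>0. \<forall>w\<in>Mset. dM u w < e \<longrightarrow> w \<in> S)"
    then show "\<Union>\<K> \<subseteq> Mset \<and> (\<forall>u\<in>\<Union>\<K>. \<exists>e>0. \<forall>w\<in>Mset. dM u w < e \<longrightarrow> w \<in> \<Union>\<K>)"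
      by (meson Sup_upper Union_least UnionE subsetD)
  qed
  then show ?thesis
    by (simp only: M_topology_def topology_inverse')
qed

lemma dM_ball_openin:
  assumes "w \<in> Mset"
  shows "openin M_topology {v\<in>Mset. dM w v < d}"
  unfolding openin_M_topology
proof (intro conjI ballI)
  fix u assume u: "u \<in> {v\<in>Mset. dM w v < d}"
  show "\<exists>e>0. \<forall>v\<in>Mset. dM u v < e \<longrightarrow> v \<in> {v\<in>Mset. dM w v < d}"
  proof (intro exI[of _ "d - dM w u"] conjI ballI impI)
    fix v assume v: "v \<in> Mset" "dM u v < d - dM w u"
    have "dM w v \<le> dM w u + dM u v" using dM_triangle assms u v by blast
    then show "v \<in> {v\<in>Mset. dM w v < d}" using v by simp
  qed (use u in simp)
qed auto

lemma topspace_M_topology: "topspace M_topology = Mset"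
proof -
  have "openin M_topology Mset" unfolding openin_M_topology by (auto intro: exI[of _ 1])
  then have "Mset \<subseteq> topspace M_topology" by (rule openin_subset)
  moreover have "topspace M_topology \<subseteq> Mset"
    unfolding topspace_def openin_M_topology by blast
  ultimately show ?thesis by blast
qed

section \<open>Sequential continuity of M(f_n) \<longrightarrow> M(f)\<close>

lemma LIMSEQ_by_subsequences:
  fixes a :: "nat \<Rightarrow> 'a::metric_space"
  assumes "\<And>r::nat \<Rightarrow> nat. strict_mono r \<Longrightarrow> \<exists>s::nat \<Rightarrow> nat. strict_mono s \<and> (\<lambda>k. a (r (s k))) \<longlonglongrightarrow> L"
  shows "a \<longlonglongrightarrow> L"
proof (rule ccontr)
  assume "\<not> a \<longlonglongrightarrow> L"
  then obtain e where e: "e > 0" "\<not> (\<forall>\<^sub>F n in sequentially. dist (a n) L < e)"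
    unfolding tendsto_iff by blast
  define S where "S = {n. dist (a n) L \<ge> e}"
  have "\<forall>N. \<exists>n\<ge>N. \<not> dist (a n) L < e"
    using e(2) unfolding not_eventually frequently_sequentially .
  then have "infinite S"
    unfolding S_def infinite_nat_iff_unbounded_le by (simp add: not_less)
  then obtain r :: "nat \<Rightarrow> nat" where r: "strict_mono r" "\<forall>n. r n \<in> S"
    using infinite_enumerate[of S] by blast
  obtain s where "(\<lambda>k. a (r (s k))) \<longlonglongrightarrow> L"
    using assms[OF r(1)] by blast
  then have "\<forall>\<^sub>F k in sequentially. dist (a (r (s k))) L < e"
    using e(1) by (rule tendstoD)
  then obtain k where "dist (a (r (s k))) L < e"
    unfolding eventually_sequentially by blast
  moreover have "e \<le> dist (a (r (s k))) L"
    using r(2) unfolding S_def by blast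
  ultimately show False by simp
qed

lemma uniform_limit_reindex:
  assumes "uniform_limit K fs f sequentially" "filterlim m sequentially sequentially"
  shows "uniform_limit K (\<lambda>k. fs (m k)) f sequentially"
  using filterlim_compose[OF assms] .

text \<open>Uniform convergence on compact sets to a continuous limit implies continuous convergence:
  f_n(x_n) \<longrightarrow> f(x) whenever x_n \<longrightarrow> x, because {x} \<union> {x_n} is compact.\<close>

lemma uniform_limit_compact_compose:
  fixes fs :: "nat \<Rightarrow> 'a::metric_space \<Rightarrow> 'b::metric_space"
  assumes unif: "\<And>K. compact K \<Longrightarrow> uniform_limit K fs f sequentially"
    and cont: "isCont f x" and xs: "xs \<longlonglongrightarrow> x"
  shows "(\<lambda>n. fs n (xs n)) \<longlonglongrightarrow> f x"
proof -
  have "compact (insert x (range xs))"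
    using compactin_sequence_with_limit[of euclidean xs x "range xs"] xs by simp
  then have "uniform_limit (insert x (range xs)) fs f sequentially" by (rule unif)
  then have close: "(\<lambda>n. dist (fs n (xs n)) (f (xs n))) \<longlonglongrightarrow> 0"
    unfolding uniform_limit_sequentially_iff
    by (intro tendstoI) (fastforce simp: eventually_sequentially)
  have "(\<lambda>n. dist (f (xs n)) (f x)) \<longlonglongrightarrow> 0"
    using isCont_tendsto_compose[OF cont xs] by (rule tendsto_dist_iff[THEN iffD1])
  then have sum: "(\<lambda>n. dist (fs n (xs n)) (f (xs n)) + dist (f (xs n)) (f x)) \<longlonglongrightarrow> 0"
    by (rule tendsto_add_zero[OF close])
  have "norm (dist (fs n (xs n)) (f x)) \<le> dist (fs n (xs n)) (f (xs n)) + dist (f (xs n)) (f x)"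
    for n by (simp add: dist_triangle)
  then have "(\<lambda>n. dist (fs n (xs n)) (f x)) \<longlonglongrightarrow> 0"
    by (intro Lim_null_comparison[OF always_eventually sum]) blast
  then show ?thesis by (rule tendsto_dist_iff[THEN iffD2])
qed

lemma dM_tendsto_AE_subseq:
  assumes us: "\<And>n. us n \<in> Mset" and u: "u \<in> Mset" and lim: "(\<lambda>n. dM (us n) u) \<longlonglongrightarrow> 0"
  shows "\<exists>s. strict_mono s \<and> (AE t in lebesgue_on {0..1}. (\<lambda>k. us (s k) t) \<longlonglongrightarrow> u t)"
proof -
  define g where "g n t = min (dist (us n t) (u t)) 1" for n t
  have "(\<lambda>n. \<integral>t. norm (g n t) \<partial>lebesgue_on {0..1}) \<longlonglongrightarrow> 0"
    using lim by (simp add: g_def dM_def)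
  then obtain s where s: "strict_mono s" "AE t in lebesgue_on {0..1}. (\<lambda>k. g (s k) t) \<longlonglongrightarrow> 0"
    using tendsto_L1_AE_subseq[of "lebesgue_on {0..1}" g] truncated_dist_integrable[OF us u]
    unfolding g_def by blast
  have pointwise: "(\<lambda>k. us (s k) t) \<longlonglongrightarrow> u t" if "(\<lambda>k. g (s k) t) \<longlonglongrightarrow> 0" for t
  proof (rule tendstoI)
    fix e :: real assume "e > 0"
    then have "\<forall>\<^sub>F k in sequentially. dist (g (s k) t) 0 < min e 1"
      using tendstoD[OF that, of "min e 1"] by simp
    then show "\<forall>\<^sub>F k in sequentially. dist (us (s k) t) (u t) < e"
      by eventually_elim (auto simp: g_def min_def split: if_splits)
  qed
  from s(2) have "AE t in lebesgue_on {0..1}. (\<lambda>k. us (s k) t) \<longlonglongrightarrow> u t"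
    by (rule eventually_mono) (rule pointwise)
  with s(1) show ?thesis by blast
qed

lemma dM_tendsto_if_AE:
  assumes vs: "\<And>n. vs n \<in> Mset" and v: "v \<in> Mset"
    and ae: "AE t in lebesgue_on {0..1}. (\<lambda>n. vs n t) \<longlonglongrightarrow> v t"
  shows "(\<lambda>n. dM (vs n) v) \<longlonglongrightarrow> 0"
proof -
  have "(\<lambda>n. integral\<^sup>L (lebesgue_on {0..1}) (\<lambda>t. min (dist (vs n t) (v t)) 1))
      \<longlonglongrightarrow> integral\<^sup>L (lebesgue_on {0..1}) (\<lambda>t::real. 0::real)"
  proof (rule integral_dominated_convergence[where w="\<lambda>_. 1"])
    show "integrable (lebesgue_on {0..1}) (\<lambda>_::real. 1::real)"
      using finite_measure.integrable_const[OF finite_measure_lebesgue_01] by blast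
    show "AE t in lebesgue_on {0..1}. (\<lambda>n. min (dist (vs n t) (v t)) 1) \<longlonglongrightarrow> 0"
      using ae
    proof eventually_elim
      case (elim t)
      then have "(\<lambda>n. min (dist (vs n t) (v t)) 1) \<longlonglongrightarrow> min 0 1"
        by (intro tendsto_min tendsto_const tendsto_dist_iff[THEN iffD1])
      then show ?case by simp
    qed
    show "(\<lambda>t. min (dist (vs n t) (v t)) 1) \<in> borel_measurable (lebesgue_on {0..1})" for n
      using vs v by (rule truncated_dist_measurable)
    show "AE t in lebesgue_on {0..1}. norm (min (dist (vs n t) (v t)) 1) \<le> 1" for n
      by simp
  qed simp
  then show ?thesis by (simp add: dM_def)
qed

lemma Mmap_tendsto:
  fixes fs :: "nat \<Rightarrow> 'a::{metric_space,second_countable_topology} \<Rightarrow> 'b::{metric_space,second_countable_topology}"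
  assumes cont_fs: "\<And>n. continuous_on UNIV (fs n)"
    and cont_f: "continuous_on UNIV f"
    and unif: "\<And>K. compact K \<Longrightarrow> uniform_limit K fs f sequentially"
    and us: "\<And>n. us n \<in> Mset" and u: "u \<in> Mset" and lim: "(\<lambda>n. dM (us n) u) \<longlonglongrightarrow> 0"
  shows "(\<lambda>n. dM (Mmap (fs n) (us n)) (Mmap f u)) \<longlonglongrightarrow> 0"
proof (rule LIMSEQ_by_subsequences)
  fix r :: "nat \<Rightarrow> nat" assume r: "strict_mono r"
  have "(\<lambda>k. dM (us (r k)) u) \<longlonglongrightarrow> 0"
    using LIMSEQ_subseq_LIMSEQ[OF lim r] by (simp add: o_def)
  then obtain s where s: "strict_mono s"
    and ae: "AE t in lebesgue_on {0..1}. (\<lambda>k. us (r (s k)) t) \<longlonglongrightarrow> u t"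
    using dM_tendsto_AE_subseq[of "\<lambda>k. us (r k)"] us u by blast
  have mono: "strict_mono (r \<circ> s)" using r s by (simp add: strict_mono_o)
  have ae_Mmap: "AE t in lebesgue_on {0..1}.
                   (\<lambda>k. Mmap (fs (r (s k))) (us (r (s k))) t) \<longlonglongrightarrow> Mmap f u t"
    using ae
  proof eventually_elim
    case (elim t)
    have "isCont f (u t)" using cont_f by (simp add: continuous_on_eq_continuous_at)
    with elim show ?case
      unfolding Mmap_def o_def
      using uniform_limit_compact_compose[OF uniform_limit_reindex[OF unif filterlim_subseq[OF mono]]]
      by (simp add: o_def)
  qed
  have "(\<lambda>k. dM (Mmap (fs (r (s k))) (us (r (s k)))) (Mmap f u)) \<longlonglongrightarrow> 0"
    by (rule dM_tendsto_if_AE[OF _ _ ae_Mmap]) (simp_all add: Mmap_Mset cont_fs cont_f us u)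
  with s show "\<exists>s. strict_mono s \<and> (\<lambda>k. dM (Mmap (fs (r (s k))) (us (r (s k)))) (Mmap f u)) \<longlonglongrightarrow> 0"
    by blast
qed

section \<open>Uniform convergence on compact subsets of M(X)\<close>

text \<open>A counterexample sequence v_N \<longrightarrow> w with indices n_N \<ge> N would
  contradict Mmap_tendsto for the reindexed maps f_(n_N) and for the constant sequence f.\<close>

lemma Mmap_locally_uniform:
  fixes fs :: "nat \<Rightarrow> 'a::{metric_space,second_countable_topology} \<Rightarrow> 'b::{metric_space,second_countable_topology}"
  assumes cont_fs: "\<And>n. continuous_on UNIV (fs n)"
    and cont_f: "continuous_on UNIV f"
    and unif: "\<And>K. compact K \<Longrightarrow> uniform_limit K fs f sequentially"
    and w: "w \<in> Mset" and e: "e > 0"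
  shows "\<exists>d>0. \<forall>\<^sub>F n in sequentially.
           \<forall>v\<in>Mset. dM w v < d \<longrightarrow> dM (Mmap (fs n) v) (Mmap f v) < e"
proof (rule ccontr)
  assume contra: "\<not> ?thesis"
  have "\<exists>n v. n \<ge> N \<and> v \<in> Mset \<and> dM w v < inverse (real (Suc N))
              \<and> e \<le> dM (Mmap (fs n) v) (Mmap f v)" for N
  proof -
    have "inverse (real (Suc N)) > 0" by simp
    then show ?thesis using contra unfolding eventually_sequentially by (meson not_less)
  qed
  then obtain nn vv where nn: "\<And>N. nn N \<ge> N" and vv: "\<And>N. vv N \<in> Mset"
    and close: "\<And>N. dM w (vv N) < inverse (real (Suc N))"
    and bad: "\<And>N. e \<le> dM (Mmap (fs (nn N)) (vv N)) (Mmap f (vv N))"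
    by metis
  have "norm (dM (vv N) w) \<le> inverse (real (Suc N))" for N
    using close[of N] dM_nonneg[of "vv N" w] by (simp add: dM_sym)
  then have lim: "(\<lambda>N. dM (vv N) w) \<longlonglongrightarrow> 0"
    by (intro Lim_null_comparison[OF always_eventually LIMSEQ_inverse_real_of_nat]) blast
  have "filterlim nn sequentially sequentially"
    using filterlim_at_top_mono[OF filterlim_ident, of nn] nn by simp
  then have "(\<lambda>N. dM (Mmap (fs (nn N)) (vv N)) (Mmap f w)) \<longlonglongrightarrow> 0"
    by (intro Mmap_tendsto[of "\<lambda>N. fs (nn N)"] uniform_limit_reindex[OF unif])
      (auto intro: cont_fs cont_f vv w lim)
  moreover have "(\<lambda>N. dM (Mmap f (vv N)) (Mmap f w)) \<longlonglongrightarrow> 0"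
    by (rule Mmap_tendsto[of "\<lambda>_. f"]) (auto intro: uniform_limit_const cont_f vv w lim)
  ultimately have sum: "(\<lambda>N. dM (Mmap (fs (nn N)) (vv N)) (Mmap f w)
                            + dM (Mmap f (vv N)) (Mmap f w)) \<longlonglongrightarrow> 0"
    by (rule tendsto_add_zero)
  have "norm (dM (Mmap (fs (nn N)) (vv N)) (Mmap f (vv N)))
          \<le> dM (Mmap (fs (nn N)) (vv N)) (Mmap f w) + dM (Mmap f (vv N)) (Mmap f w)" for N
    using dM_triangle[of "Mmap (fs (nn N)) (vv N)" "Mmap f w" "Mmap f (vv N)"]
      Mmap_Mset[OF cont_fs vv] Mmap_Mset[OF cont_f vv] Mmap_Mset[OF cont_f w]
      dM_nonneg[of "Mmap (fs (nn N)) (vv N)" "Mmap f (vv N)"]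
    by (simp add: dM_sym[of "Mmap f w"])
  then have "(\<lambda>N. dM (Mmap (fs (nn N)) (vv N)) (Mmap f (vv N))) \<longlonglongrightarrow> 0"
    by (intro Lim_null_comparison[OF always_eventually sum]) blast
  then have "\<forall>\<^sub>F N in sequentially. dist (dM (Mmap (fs (nn N)) (vv N)) (Mmap f (vv N))) 0 < e"
    using e by (rule tendstoD)
  then obtain N where "dist (dM (Mmap (fs (nn N)) (vv N)) (Mmap f (vv N))) 0 < e"
    unfolding eventually_sequentially by blast
  with bad[of N] show False by (simp add: dist_real_def)
qed

text \<open>Part 2 of the theorem: M(f_n) \<longrightarrow> M(f) uniformly on each compact K \<subseteq> M(X), by covering
  K with finitely many of the balls provided by Mmap_locally_uniform.\<close>

lemma Mmap_uniform_on_compactin: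
  fixes fs :: "nat \<Rightarrow> 'a::{metric_space,second_countable_topology} \<Rightarrow> 'b::{metric_space,second_countable_topology}"
  assumes cont_fs: "\<And>n. continuous_on UNIV (fs n)"
    and cont_f: "continuous_on UNIV f"
    and unif: "\<And>K. compact K \<Longrightarrow> uniform_limit K fs f sequentially"
    and K: "compactin M_topology K" and e: "e > 0"
  shows "\<forall>\<^sub>F n in sequentially. \<forall>u\<in>K. dM (Mmap (fs n) u) (Mmap f u) < e"
proof -
  have KM: "K \<subseteq> Mset"
    using compactin_subset_topspace[OF K] by (simp add: topspace_M_topology)
  have "\<forall>w\<in>K. \<exists>r>0. \<forall>\<^sub>F n in sequentially.
          \<forall>v\<in>Mset. dM w v < r \<longrightarrow> dM (Mmap (fs n) v) (Mmap f v) < e"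
    using Mmap_locally_uniform[OF cont_fs cont_f unif _ e] KM by blast
  then obtain d where d: "\<forall>w\<in>K. d w > 0 \<and> (\<forall>\<^sub>F n in sequentially.
          \<forall>v\<in>Mset. dM w v < d w \<longrightarrow> dM (Mmap (fs n) v) (Mmap f v) < e)"
    by (rule bchoice[THEN exE])
  define ball where "ball w = {v\<in>Mset. dM w v < d w}" for w
  have "u \<in> ball u" if "u \<in> K" for u
    using KM d that by (simp add: ball_def dM_self subset_iff)
  then have cover: "K \<subseteq> \<Union>(ball ` K)" by blast
  have "openin M_topology (ball w)" if "w \<in> K" for w
    unfolding ball_def using KM that by (intro dM_ball_openin) blast
  then have "\<And>U. U \<in> ball ` K \<Longrightarrow> openin M_topology U" by blast
  then obtain \<F> where "finite \<F>" "\<F> \<subseteq> ball ` K" "K \<subseteq> \<Union>\<F>"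
    using compactinD[OF K _ cover] by blast
  then obtain C where C: "finite C" "C \<subseteq> K" "K \<subseteq> \<Union>(ball ` C)"
    by (metis finite_subset_image)
  have "\<forall>\<^sub>F n in sequentially. \<forall>w\<in>C. \<forall>v\<in>ball w. dM (Mmap (fs n) v) (Mmap f v) < e"
  proof (rule eventually_ball_finite[OF C(1)], rule ballI)
    fix w assume "w \<in> C"
    then have "\<forall>\<^sub>F n in sequentially.
                 \<forall>v\<in>Mset. dM w v < d w \<longrightarrow> dM (Mmap (fs n) v) (Mmap f v) < e"
      using C(2) d by blast
    then show "\<forall>\<^sub>F n in sequentially. \<forall>v\<in>ball w. dM (Mmap (fs n) v) (Mmap f v) < e"
      by (rule eventually_mono) (simp add: ball_def)
  qed
  then show ?thesis
    by eventually_elim (use C(3) in blast)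
qed

theorem mainTheorem6:
  fixes fs :: "nat \<Rightarrow> 'a::{metric_space,second_countable_topology} \<Rightarrow> 'b::{metric_space,second_countable_topology}"
    and f :: "'a \<Rightarrow> 'b"
  assumes cont_fs: "\<And>n. continuous_on UNIV (fs n)"
    and cont_f: "continuous_on UNIV f"
    and unif: "\<And>K. compact K \<Longrightarrow> uniform_limit K fs f sequentially"
  shows "(\<forall>us u. (\<forall>n. us n \<in> Mset) \<longrightarrow> u \<in> Mset \<longrightarrow> (\<lambda>n. dM (us n) u) \<longlonglongrightarrow> 0
            \<longrightarrow> (\<lambda>n. dM (Mmap (fs n) (us n)) (Mmap f u)) \<longlonglongrightarrow> 0)
       \<and> (\<forall>K. compactin M_topology K \<longrightarrow>
            (\<forall>e>0. \<forall>\<^sub>F n in sequentially. \<forall>u\<in>K. dM (Mmap (fs n) u) (Mmap f u) < e))"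
  using Mmap_tendsto[OF cont_fs cont_f unif] Mmap_uniform_on_compactin[OF cont_fs cont_f unif]
  by blast

end
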